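(* Let $(X,d)$ be a proper metric space and $X+_fW$ a Hausdorff compactification of $X$ that is perspective with respect to the bounded coarse structure $\varepsilon_d$. Then for every $u\in\mathfrak{U}_f$ and every $t>0$ there is a bounded set $S\subseteq X$ such that $(x,y)\in u$ for all $x,y\in X\setminus S$ with $d(x,y)<t$.
   Context: $X+_fW$ is $X\sqcup W$ with closed sets the $D$ with $D\cap X$ closed in $X$, $D\cap W$ closed in $W$, $f(D\cap X)\subseteq D$, for an admissible $f$ (sending $\emptyset$ to $\emptyset$, preserving finite unions); a Hausdorff compactification means it is compact Hausdorff with $X$ dense. $\mathfrak{U}_f$ is its unique compatible uniform structure. $\varepsilon_d=\{e\subseteq X\times X:\sup_{(x,y)\in e}d(x,y)<\infty\}$. Perspective means every $e\in\varepsilon_d$ satisfies $\mathrm{Cl}_{(X+_fW)^2}(e)\cap((X+_fW)^2-X^2)\subseteq\{(p,p):p\in W\}$. *)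

theory Defs
  imports "HOL-Analysis.Analysis"
begin

definition proper_metric :: "'a set \<Rightarrow> ('a \<Rightarrow> 'a \<Rightarrow> real) \<Rightarrow> bool" where
  "proper_metric X d \<longleftrightarrow> Metric_space X d \<and>
     (\<forall>S. S \<subseteq> X \<and> Metric_space.mbounded X d S \<and> closedin (Metric_space.mtopology X d) S
          \<longrightarrow> compactin (Metric_space.mtopology X d) S)"

definition admissible :: "'a set \<Rightarrow> 'b set \<Rightarrow> ('a set \<Rightarrow> 'b set) \<Rightarrow> bool" where
  "admissible X W f \<longleftrightarrow> (\<forall>A. A \<subseteq> X \<longrightarrow> f A \<subseteq> W) \<and> f {} = {} \<and>
     (\<forall>A B. A \<subseteq> X \<longrightarrow> B \<subseteq> X \<longrightarrow> f (A \<union> B) = f A \<union> f B)"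

definition sum_carrier :: "'a set \<Rightarrow> 'b set \<Rightarrow> ('a + 'b) set" where
  "sum_carrier X W = Inl ` X \<union> Inr ` W"

definition sumf_closed :: "'a topology \<Rightarrow> 'b topology \<Rightarrow> ('a set \<Rightarrow> 'b set) \<Rightarrow> ('a + 'b) set \<Rightarrow> bool" where
  "sumf_closed TX TW f D \<longleftrightarrow> D \<subseteq> sum_carrier (topspace TX) (topspace TW) \<and>
     closedin TX {x. Inl x \<in> D} \<and> closedin TW {w. Inr w \<in> D} \<and>
     Inr ` f {x. Inl x \<in> D} \<subseteq> D"

definition sumf_topology :: "'a topology \<Rightarrow> 'b topology \<Rightarrow> ('a set \<Rightarrow> 'b set) \<Rightarrow> ('a + 'b) topology" where
  "sumf_topology TX TW f = topology (\<lambda>U. U \<subseteq> sum_carrier (topspace TX) (topspace TW) \<and>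
      sumf_closed TX TW f (sum_carrier (topspace TX) (topspace TW) - U))"

definition hausdorff_compactification :: "'a topology \<Rightarrow> 'b topology \<Rightarrow> ('a set \<Rightarrow> 'b set) \<Rightarrow> bool" where
  "hausdorff_compactification TX TW f \<longleftrightarrow>
     compact_space (sumf_topology TX TW f) \<and> Hausdorff_space (sumf_topology TX TW f) \<and>
     (sumf_topology TX TW f) closure_of (Inl ` topspace TX) = topspace (sumf_topology TX TW f)"

text \<open>The unique compatible uniform structure of a compact Hausdorff space:
  the entourages are exactly the neighbourhoods of the diagonal in the square.\<close>
definition compact_uniformity :: "'c topology \<Rightarrow> ('c \<times> 'c) set set" where
  "compact_uniformity T = {u. u \<subseteq> topspace T \<times> topspace T \<and>
      (\<exists>V. openin (prod_topology T T) V \<and> Id_on (topspace T) \<subseteq> V \<and> V \<subseteq> u)}"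

definition bounded_coarse :: "'a set \<Rightarrow> ('a \<Rightarrow> 'a \<Rightarrow> real) \<Rightarrow> ('a \<times> 'a) set set" where
  "bounded_coarse X d = {e. e \<subseteq> X \<times> X \<and> (\<exists>B. \<forall>(x,y)\<in>e. d x y \<le> B)}"

definition perspective :: "'a set \<Rightarrow> ('a \<Rightarrow> 'a \<Rightarrow> real) \<Rightarrow> 'b topology \<Rightarrow> ('a set \<Rightarrow> 'b set) \<Rightarrow> bool" where
  "perspective X d TW f \<longleftrightarrow>
     (\<forall>e\<in>bounded_coarse X d.
        (prod_topology (sumf_topology (Metric_space.mtopology X d) TW f)
                       (sumf_topology (Metric_space.mtopology X d) TW f))
          closure_of ((\<lambda>(x,y). (Inl x, Inl y)) ` e)
        \<inter> ((sum_carrier X (topspace TW) \<times> sum_carrier X (topspace TW)) - (Inl ` X \<times> Inl ` X))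
        \<subseteq> {(Inr p, Inr p) | p. p \<in> topspace TW})"

end

theory Submission imports Defs begin

text \<open>
  Given an entourage \<open>u\<close> and \<open>t > 0\<close>, choose an open neighbourhood \<open>V \<subseteq> u\<close> of the diagonal and
  consider the bounded-coarse set \<open>e\<close> of pairs \<open>(x, y)\<close> with \<open>d x y < t\<close> and \<open>(x, y) \<notin> V\<close>. The
  closure of \<open>e\<close> in the square of the compactification misses the open set \<open>V\<close>, hence the
  diagonal; by perspectivity it therefore contains no point at infinity at all. So the closure
  is a compact subset of \<open>X \<times> X\<close>, and its first projection is the required bounded set \<open>S\<close>.
\<close>

lemma admissible_subset: "admissible X W f \<Longrightarrow> A \<subseteq> X \<Longrightarrow> f A \<subseteq> W"
  unfolding admissible_def by blast

lemma admissible_empty: "admissible X W f \<Longrightarrow> f {} = {}"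
  unfolding admissible_def by blast

lemma admissible_Un:
  "admissible X W f \<Longrightarrow> A \<subseteq> X \<Longrightarrow> B \<subseteq> X \<Longrightarrow> f (A \<union> B) = f A \<union> f B"
  unfolding admissible_def by blast

lemma admissible_mono:
  assumes "admissible X W f" "A \<subseteq> B" "B \<subseteq> X"
  shows "f A \<subseteq> f B"
proof -
  have "f B = f (A \<union> B)" using assms(2) by (simp add: Un_absorb1)
  also have "\<dots> = f A \<union> f B" using assms by (simp add: admissible_Un subset_trans)
  finally show ?thesis by blast
qed

lemma istopology_sumf:
  fixes TX :: "'a topology" and TW :: "'b topology"
  assumes adm: "admissible (topspace TX) (topspace TW) f"
  shows "istopology (\<lambda>U. U \<subseteq> sum_carrier (topspace TX) (topspace TW) \<and>
      sumf_closed TX TW f (sum_carrier (topspace TX) (topspace TW) - U))"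
  unfolding istopology_def
proof (rule conjI; intro allI impI)
  let ?C = "sum_carrier (topspace TX) (topspace TW)"
  fix S T
  assume S: "S \<subseteq> ?C \<and> sumf_closed TX TW f (?C - S)"
    and T: "T \<subseteq> ?C \<and> sumf_closed TX TW f (?C - T)"
  have Inl_Int: "{x. Inl x \<in> ?C - S \<inter> T} = {x. Inl x \<in> ?C - S} \<union> {x. Inl x \<in> ?C - T}"
    and Inr_Int: "{x. Inr x \<in> ?C - S \<inter> T} = {x. Inr x \<in> ?C - S} \<union> {x. Inr x \<in> ?C - T}"
    by blast+
  have "{x. Inl x \<in> ?C - S} \<subseteq> topspace TX" "{x. Inl x \<in> ?C - T} \<subseteq> topspace TX"
    using S T unfolding sumf_closed_def by (auto dest: closedin_subset)
  then have "f {x. Inl x \<in> ?C - S \<inter> T} = f {x. Inl x \<in> ?C - S} \<union> f {x. Inl x \<in> ?C - T}"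
    unfolding Inl_Int by (rule admissible_Un[OF adm])
  then show "S \<inter> T \<subseteq> ?C \<and> sumf_closed TX TW f (?C - S \<inter> T)"
    using S T unfolding sumf_closed_def Inl_Int Inr_Int by auto
next
  let ?C = "sum_carrier (topspace TX) (topspace TW)"
  fix K
  assume K: "\<forall>U\<in>K. U \<subseteq> ?C \<and> sumf_closed TX TW f (?C - U)"
  have "openin TX {x. Inl x \<in> k}" "openin TW {x. Inr x \<in> k}" if "k \<in> K" for k
  proof -
    have "closedin TX {x. Inl x \<in> ?C - k}" "closedin TW {x. Inr x \<in> ?C - k}" "k \<subseteq> ?C"
      using K that unfolding sumf_closed_def by auto
    moreover have "{x. Inl x \<in> k} = topspace TX - {x. Inl x \<in> ?C - k}"
      and "{x. Inr x \<in> k} = topspace TW - {x. Inr x \<in> ?C - k}"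
      using \<open>k \<subseteq> ?C\<close> unfolding sum_carrier_def by auto
    ultimately show "openin TX {x. Inl x \<in> k}" "openin TW {x. Inr x \<in> k}" by auto
  qed
  then have "openin TX (\<Union>k\<in>K. {x. Inl x \<in> k})" "openin TW (\<Union>k\<in>K. {x. Inr x \<in> k})"
    by auto
  moreover have "{x. Inl x \<in> ?C - \<Union>K} = topspace TX - (\<Union>k\<in>K. {x. Inl x \<in> k})"
    and "{x. Inr x \<in> ?C - \<Union>K} = topspace TW - (\<Union>k\<in>K. {x. Inr x \<in> k})"
    unfolding sum_carrier_def by auto
  moreover have "Inr ` f {x. Inl x \<in> ?C - \<Union>K} \<subseteq> ?C - \<Union>K"
  proof
    fix z :: "'a + 'b" assume "z \<in> Inr ` f {x. Inl x \<in> ?C - \<Union>K}"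
    then obtain w where z: "z = Inr w" and w: "w \<in> f {x. Inl x \<in> ?C - \<Union>K}" by auto
    have "{x. Inl x \<in> ?C - \<Union>K} \<subseteq> topspace TX" unfolding sum_carrier_def by auto
    then have "z \<in> ?C" using w z admissible_subset[OF adm] unfolding sum_carrier_def by blast
    moreover have "z \<notin> k" if "k \<in> K" for k
    proof -
      have "f {x. Inl x \<in> ?C - \<Union>K} \<subseteq> f {x. Inl x \<in> ?C - k}"
        using that by (intro admissible_mono[OF adm]) (auto simp: sum_carrier_def)
      then show ?thesis using K that w z unfolding sumf_closed_def by blast
    qed
    ultimately show "z \<in> ?C - \<Union>K" by blast
  qed
  ultimately show "\<Union>K \<subseteq> ?C \<and> sumf_closed TX TW f (?C - \<Union>K)"
    using K unfolding sumf_closed_def by auto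
qed

lemma openin_sumf:
  assumes "admissible (topspace TX) (topspace TW) f"
  shows "openin (sumf_topology TX TW f) U \<longleftrightarrow> U \<subseteq> sum_carrier (topspace TX) (topspace TW) \<and>
      sumf_closed TX TW f (sum_carrier (topspace TX) (topspace TW) - U)"
  unfolding sumf_topology_def using topology_inverse'[OF istopology_sumf[OF assms]] by simp

lemma topspace_sumf:
  assumes adm: "admissible (topspace TX) (topspace TW) f"
  shows "topspace (sumf_topology TX TW f) = sum_carrier (topspace TX) (topspace TW)"
proof (rule antisym)
  show "topspace (sumf_topology TX TW f) \<subseteq> sum_carrier (topspace TX) (topspace TW)"
    using openin_topspace[of "sumf_topology TX TW f"] unfolding openin_sumf[OF adm] by blast
  have "openin (sumf_topology TX TW f) (sum_carrier (topspace TX) (topspace TW))"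
    unfolding openin_sumf[OF adm] sumf_closed_def using admissible_empty[OF adm] by auto
  then show "sum_carrier (topspace TX) (topspace TW) \<subseteq> topspace (sumf_topology TX TW f)"
    by (rule openin_subset)
qed

lemma openin_sumf_Inl:
  assumes adm: "admissible (topspace TX) (topspace TW) f" and G: "openin TX G"
  shows "openin (sumf_topology TX TW f) (Inl ` G)"
  unfolding openin_sumf[OF adm]
proof
  let ?C = "sum_carrier (topspace TX) (topspace TW)"
  show "Inl ` G \<subseteq> ?C" using openin_subset[OF G] unfolding sum_carrier_def by auto
  have "{x. Inl x \<in> ?C - Inl ` G} = topspace TX - G" "{x. Inr x \<in> ?C - Inl ` G} = topspace TW"
    unfolding sum_carrier_def by auto
  moreover have "f (topspace TX - G) \<subseteq> topspace TW" by (rule admissible_subset[OF adm]) blast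
  ultimately show "sumf_closed TX TW f (?C - Inl ` G)"
    using G unfolding sumf_closed_def sum_carrier_def by auto
qed

lemma topspace_sumf_mtopology:
  assumes "Metric_space X d" "admissible X (topspace TW) f"
  shows "topspace (sumf_topology (Metric_space.mtopology X d) TW f) = sum_carrier X (topspace TW)"
  using assms topspace_sumf[of "Metric_space.mtopology X d" TW f]
  by (simp add: Metric_space.topspace_mtopology)

lemma continuous_map_projl_sumf:
  assumes adm: "admissible (topspace TX) (topspace TW) f"
  shows "continuous_map (subtopology (sumf_topology TX TW f) (Inl ` topspace TX)) TX projl"
  unfolding continuous_map_def
proof (intro conjI allI impI Pi_I)
  fix z assume "z \<in> topspace (subtopology (sumf_topology TX TW f) (Inl ` topspace TX))"
  then show "projl z \<in> topspace TX" by auto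
next
  fix U assume U: "openin TX U"
  have "{z \<in> topspace (subtopology (sumf_topology TX TW f) (Inl ` topspace TX)). projl z \<in> U}
      = Inl ` U \<inter> Inl ` topspace TX"
    using openin_subset[OF U] by (auto simp: topspace_sumf[OF adm] sum_carrier_def)
  then show "openin (subtopology (sumf_topology TX TW f) (Inl ` topspace TX))
      {z \<in> topspace (subtopology (sumf_topology TX TW f) (Inl ` topspace TX)). projl z \<in> U}"
    using openin_sumf_Inl[OF adm U] by (auto simp: openin_subtopology)
qed

lemma compactin_projl_sumf:
  assumes "admissible (topspace TX) (topspace TW) f"
    and "compactin (sumf_topology TX TW f) K" "K \<subseteq> Inl ` topspace TX"
  shows "compactin TX (projl ` K)"
  using assms by (intro image_compactin[OF _ continuous_map_projl_sumf])
    (auto simp: compactin_subtopology)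

lemma perspective_closure_subset:
  fixes X :: "'a set" and d :: "'a \<Rightarrow> 'a \<Rightarrow> real" and TW :: "'b topology"
    and f :: "'a set \<Rightarrow> 'b set"
  defines "T \<equiv> sumf_topology (Metric_space.mtopology X d) TW f"
  assumes "Metric_space X d" "admissible X (topspace TW) f" "perspective X d TW f"
    and "e \<in> bounded_coarse X d"
    and "prod_topology T T closure_of ((\<lambda>(x, y). (Inl x, Inl y)) ` e) \<inter> Id_on (topspace T) = {}"
  shows "prod_topology T T closure_of ((\<lambda>(x, y). (Inl x, Inl y)) ` e) \<subseteq> Inl ` X \<times> Inl ` X"
proof
  let ?C = "prod_topology T T closure_of ((\<lambda>(x, y). (Inl x, Inl y)) ` e)"
  fix z assume z: "z \<in> ?C"
  have T: "topspace T = sum_carrier X (topspace TW)"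
    unfolding T_def using assms(2,3) by (rule topspace_sumf_mtopology)
  have "?C \<inter> (sum_carrier X (topspace TW) \<times> sum_carrier X (topspace TW) - Inl ` X \<times> Inl ` X)
      \<subseteq> {(Inr p, Inr p) | p. p \<in> topspace TW}"
    unfolding T_def using assms(4,5) by (simp add: perspective_def)
  moreover have "z \<in> sum_carrier X (topspace TW) \<times> sum_carrier X (topspace TW)"
    using closure_of_subset_topspace z T by fastforce
  ultimately have "z \<in> Inl ` X \<times> Inl ` X \<or> z \<in> Id_on (topspace T)"
    using z T by (auto simp: sum_carrier_def)
  then show "z \<in> Inl ` X \<times> Inl ` X"
    using z assms(6) by blast
qed

lemma compactin_projl_perspective_closure:
  fixes X :: "'a set" and d :: "'a \<Rightarrow> 'a \<Rightarrow> real" and TW :: "'b topology"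
    and f :: "'a set \<Rightarrow> 'b set"
  defines "T \<equiv> sumf_topology (Metric_space.mtopology X d) TW f"
  assumes "Metric_space X d" "admissible X (topspace TW) f" "compact_space T"
    and "perspective X d TW f" "e \<in> bounded_coarse X d"
    and "prod_topology T T closure_of ((\<lambda>(x, y). (Inl x, Inl y)) ` e) \<inter> Id_on (topspace T) = {}"
  shows "compactin (Metric_space.mtopology X d)
    (projl ` fst ` (prod_topology T T closure_of ((\<lambda>(x, y). (Inl x, Inl y)) ` e)))"
proof -
  let ?C = "prod_topology T T closure_of ((\<lambda>(x, y). (Inl x, Inl y)) ` e)"
  have adm: "admissible (topspace (Metric_space.mtopology X d)) (topspace TW) f"
    using assms(2,3) by (simp add: Metric_space.topspace_mtopology)
  have "compactin (prod_topology T T) ?C"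
    using assms(4) by (intro closedin_compact_space) (simp_all add: compact_space_prod_topology)
  then have "compactin T (fst ` ?C)"
    by (rule image_compactin[OF _ continuous_map_fst])
  moreover have "fst ` ?C \<subseteq> Inl ` topspace (Metric_space.mtopology X d)"
    using image_mono[OF perspective_closure_subset[OF assms(2,3,5-7)[unfolded T_def]], of fst]
    by (simp add: T_def Metric_space.topspace_mtopology[OF assms(2)] split: if_split_asm)
  ultimately show ?thesis
    unfolding T_def by (rule compactin_projl_sumf[OF adm])
qed

lemma projl_fst_closure_of_Inl_pairs:
  assumes "(\<lambda>(x, y). (Inl x, Inl y)) ` e \<subseteq> topspace (prod_topology T T)" "(x, y) \<in> e"
  shows "x \<in> projl ` fst ` (prod_topology T T closure_of ((\<lambda>(x, y). (Inl x, Inl y)) ` e))"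
proof -
  have "(Inl x, Inl y) \<in> prod_topology T T closure_of ((\<lambda>(x, y). (Inl x, Inl y)) ` e)"
    using closure_of_subset[OF assms(1)] assms(2) by force
  then have "Inl x \<in> fst ` (prod_topology T T closure_of ((\<lambda>(x, y). (Inl x, Inl y)) ` e))"
    by (rule rev_image_eqI) simp
  then show ?thesis
    by (rule rev_image_eqI) simp
qed

theorem mainTheorem18:
  fixes X :: "'a set" and d :: "'a \<Rightarrow> 'a \<Rightarrow> real"
    and TW :: "'b topology" and f :: "'a set \<Rightarrow> 'b set"
  assumes "proper_metric X d"
    and "admissible X (topspace TW) f"
    and "hausdorff_compactification (Metric_space.mtopology X d) TW f"
    and "perspective X d TW f"
  shows "\<forall>u \<in> compact_uniformity (sumf_topology (Metric_space.mtopology X d) TW f).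
           \<forall>t > 0. \<exists>S. S \<subseteq> X \<and> Metric_space.mbounded X d S \<and>
             (\<forall>x \<in> X - S. \<forall>y \<in> X - S. d x y < t \<longrightarrow> (Inl x, Inl y) \<in> u)"
proof (intro ballI allI impI)
  fix u and t :: real
  let ?T = "sumf_topology (Metric_space.mtopology X d) TW f"
  assume "u \<in> compact_uniformity ?T"
  then obtain V where V: "openin (prod_topology ?T ?T) V" "Id_on (topspace ?T) \<subseteq> V" "V \<subseteq> u"
    unfolding compact_uniformity_def by blast
  have X: "Metric_space X d" using assms(1) unfolding proper_metric_def by blast
  define e where "e = {(x, y). x \<in> X \<and> y \<in> X \<and> d x y < t \<and> (Inl x, Inl y) \<notin> V}"
  let ?E = "(\<lambda>(x, y). (Inl x, Inl y)) ` e"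
  let ?C = "prod_topology ?T ?T closure_of ?E"
  have e: "e \<in> bounded_coarse X d"
    unfolding bounded_coarse_def e_def by (auto intro!: exI[of _ t])
  have E: "?E \<subseteq> topspace (prod_topology ?T ?T) - V"
    using topspace_sumf_mtopology[OF X assms(2)] by (auto simp: e_def sum_carrier_def)
  have "?C \<subseteq> topspace (prod_topology ?T ?T) - V"
    using E closedin_diff[OF closedin_topspace V(1)] by (rule closure_of_minimal)
  define S where "S = projl ` fst ` ?C"
  have "compactin (Metric_space.mtopology X d) S"
    unfolding S_def using \<open>?C \<subseteq> _\<close> V(2) assms(3) unfolding hausdorff_compactification_def
    by (intro compactin_projl_perspective_closure[OF X assms(2) _ assms(4) e]) auto
  then have "Metric_space.mbounded X d S" "S \<subseteq> X"
    using Metric_space.compactin_imp_mbounded[OF X] Metric_space.mbounded_subset_mspace[OF X]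
    by blast+
  moreover have "(Inl x, Inl y) \<in> u" if "x \<in> X - S" "y \<in> X - S" "d x y < t" for x y
  proof (rule ccontr)
    assume "(Inl x, Inl y) \<notin> u"
    then have "(x, y) \<in> e"
      unfolding e_def using that V(3) by blast
    then have "x \<in> S"
      unfolding S_def using E by (intro projl_fst_closure_of_Inl_pairs) blast+
    with that show False by blast
  qed
  ultimately show "\<exists>S. S \<subseteq> X \<and> Metric_space.mbounded X d S \<and>
             (\<forall>x \<in> X - S. \<forall>y \<in> X - S. d x y < t \<longrightarrow> (Inl x, Inl y) \<in> u)"
    by blast
qed

end
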